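(* Let $s_1 \geq s_2 \geq \dots \geq s_n$ be the side lengths of a sequence of squares with $s_1 \leq 0.295$. Consider the following packing procedure in the unit disk $\mathcal{D}$: an axis-parallel square container $\mathcal{X}$ of side length $1.388$ is placed concentric with $\mathcal{D}$, and four square containers $\mathcal{X}_1,\dots,\mathcal{X}_4$ of side length $0.295$ are placed inside $\mathcal{D}$, one adjacent to each side of $\mathcal{X}$ (outside $\mathcal{X}$); the square $s_i$ is placed into $\mathcal{X}_i$ for $i = 1,\dots,4$, and the squares $s_5,\dots,s_n$ are packed into $\mathcal{X}$ using \textsc{Shelf Packing}. If this procedure fails to pack the sequence, then $\sum_{i=1}^n s_i^2 > \frac{8}{5}$.
   Context: $\mathcal{D}$ denotes the disk of radius $1$. \textsc{Shelf Packing} into an axis-parallel square container processes the squares in order of non-increasing side length and places them axis-parallel in horizontal shelves stacked from the bottom upward: the first square of a shelf determines its height, subsequent squares are placed next to each other along the shelf's bottom from left to right, and when the next square does not fit into the remaining width of the current shelf, a new shelf is opened on top of the current one starting with that square. It fails if some square would have to be placed in a shelf exceeding the container's height. The procedure fails to pack the sequence if \textsc{Shelf Packing} fails to pack $s_5,\dots,s_n$ into $\mathcal{X}$. *)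

theory Defs
  imports Complex_Main
begin

text \<open>Shelf Packing of a list of square side lengths (processed in the given order,
  which is assumed non-increasing) into an axis-parallel W x H container.
  State: y = bottom of the current shelf, h = its height, w = width already used in it.\<close>

fun shelf_aux :: "real \<Rightarrow> real \<Rightarrow> real \<Rightarrow> real \<Rightarrow> real \<Rightarrow> real list \<Rightarrow> bool" where
  "shelf_aux W H y h w [] = True"
| "shelf_aux W H y h w (s # ss) =
     (if w + s \<le> W then shelf_aux W H y h (w + s) ss
      else (s \<le> W \<and> y + h + s \<le> H \<and> shelf_aux W H (y + h) s s ss))"

text \<open>Initially no shelf is open: modelled as a full shelf of height 0 at the bottom,
  so the first (positive) square opens the first shelf at height 0.\<close>
definition shelf_packs :: "real \<Rightarrow> real \<Rightarrow> real list \<Rightarrow> bool" where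
  "shelf_packs W H ss = shelf_aux W H 0 0 W ss"

end

theory Submission
  imports Defs
begin

text \<open>Let \<open>a = s\<^sub>5\<close> be the first (largest) square given to Shelf Packing in the
  \<open>W \<times> W\<close> container \<open>\<X>\<close>. Every shelf that is closed is filled up to a width
  greater than \<open>W - a\<close> by squares at least as tall as the next shelf, so when the
  procedure fails the squares \<open>s\<^sub>5, \<dots>, s\<^sub>n\<close> cover an area greater than
  \<open>(W - a)\<^sup>2 + a\<^sup>2\<close>. The squares \<open>s\<^sub>1, \<dots>, s\<^sub>4\<close> add at least \<open>4 a\<^sup>2\<close>, and
  \<open>(W - a)\<^sup>2 + 5 a\<^sup>2 \<ge> 5 W\<^sup>2 / 6\<close>, which exceeds \<open>8/5\<close> for \<open>W = 1.388\<close>.\<close>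

text \<open>Invariant of the packing loop: \<open>m\<close> is the square packed last and \<open>a\<close> the height
  of the first shelf.\<close>

lemma shelf_aux_fails_area:
  fixes W H a :: real
  assumes "sorted_wrt (\<ge>) (m # ss)" "\<forall>x\<in>set ss. 0 \<le> x"
    and "m \<le> h" "h \<le> a" "h \<le> w" "a < W"
    and "\<not> shelf_aux W H y h w ss"
  shows "(W - a) * (H - y - h) - (w - h) * m < (\<Sum>x\<leftarrow>ss. x\<^sup>2)"
  using assms
proof (induction ss arbitrary: m y h w)
  case Nil
  then show ?case by simp
next
  case (Cons s ss)
  have s: "0 \<le> s" "s \<le> m" and sorted: "sorted_wrt (\<ge>) (s # ss)"
    using Cons.prems(1,2) by auto
  have "(w - h) * s \<le> (w - h) * m"
    using s Cons.prems(5) by (simp add: mult_left_mono)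
  show ?case
  proof (cases "w + s \<le> W")
    case True
    then have "\<not> shelf_aux W H y h (w + s) ss" using Cons.prems(7) by simp
    then have "(W - a) * (H - y - h) - (w + s - h) * s < (\<Sum>x\<leftarrow>ss. x\<^sup>2)"
      using Cons.IH[OF sorted] Cons.prems s by simp
    then show ?thesis
      using \<open>(w - h) * s \<le> (w - h) * m\<close> by (simp add: algebra_simps power2_eq_square)
  next
    case False
    have "(W - a) * s \<le> (w - h + s) * s"
      using False Cons.prems(4) s by (simp add: mult_right_mono)
    then have new_shelf: "(W - a) * (H - y - h) - (w - h) * m \<le> (W - a) * (H - (y + h) - s) + s\<^sup>2"
      using \<open>(w - h) * s \<le> (w - h) * m\<close> by (simp add: algebra_simps power2_eq_square)
    have "0 \<le> (\<Sum>x\<leftarrow>ss. x\<^sup>2)"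
      by (rule sum_list_nonneg) auto
    show ?thesis
    proof (cases "y + h + s \<le> H")
      case False
      then have "(W - a) * (H - (y + h) - s) < 0"
        using Cons.prems(6) by (simp add: mult_pos_neg)
      then show ?thesis
        using new_shelf \<open>0 \<le> (\<Sum>x\<leftarrow>ss. x\<^sup>2)\<close> by simp
    next
      case True
      have "s \<le> W" using s Cons.prems(3,4,6) by linarith
      then have "\<not> shelf_aux W H (y + h) s s ss"
        using Cons.prems(7) False True by simp
      then have "(W - a) * (H - (y + h) - s) < (\<Sum>x\<leftarrow>ss. x\<^sup>2)"
        using Cons.IH[OF sorted, where y = "y + h" and h = s and w = s] Cons.prems s by simp
      then show ?thesis
        using new_shelf by simp
    qed
  qed
qed

lemma shelf_packs_fails_area:
  fixes W H a :: real
  assumes "sorted_wrt (\<ge>) (a # ss)" "\<forall>x\<in>set ss. 0 \<le> x"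
    and "0 < a" "a < W"
    and "\<not> shelf_packs W H (a # ss)"
  shows "(W - a) * (H - a) + a\<^sup>2 < (\<Sum>x\<leftarrow>a # ss. x\<^sup>2)"
proof (cases "a \<le> H")
  case True
  then have "\<not> shelf_aux W H 0 a a ss"
    using assms(3-5) by (simp add: shelf_packs_def)
  then show ?thesis
    using shelf_aux_fails_area[of a ss a a a W H 0] assms(1-4) by simp
next
  case False
  then have "(W - a) * (H - a) < 0"
    using assms(4) by (simp add: mult_pos_neg)
  moreover have "0 \<le> (\<Sum>x\<leftarrow>ss. x\<^sup>2)"
    by (rule sum_list_nonneg) auto
  ultimately show ?thesis
    by simp
qed

lemma weighted_square_sum_lower_bound:
  fixes W a k :: real
  assumes "0 \<le> k"
  shows "k * W\<^sup>2 \<le> (k + 1) * ((W - a)\<^sup>2 + k * a\<^sup>2)"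
proof -
  have "(k + 1) * ((W - a)\<^sup>2 + k * a\<^sup>2) - k * W\<^sup>2 = (W - (k + 1) * a)\<^sup>2"
    by (simp add: algebra_simps power2_eq_square)
  moreover have "0 \<le> (W - (k + 1) * a)\<^sup>2"
    by simp
  ultimately show ?thesis
    by linarith
qed

lemma lift_Suc_antimono_le_ivl:
  fixes s :: "nat \<Rightarrow> real"
  assumes "\<forall>i. 1 \<le> i \<and> i < n \<longrightarrow> s (Suc i) \<le> s i"
    and "1 \<le> i" "i \<le> j" "j \<le> n"
  shows "s j \<le> s i"
  using assms(3)
proof (induction j rule: dec_induct)
  case base
  then show ?case by simp
next
  case (step k)
  then have "s (Suc k) \<le> s k"
    using assms(1,2,4) by simp
  then show ?case
    using step.IH by linarith
qed

lemma shelf_packs_upt_fails_area: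
  fixes s :: "nat \<Rightarrow> real"
  assumes mono: "\<And>i j. k \<le> i \<Longrightarrow> i \<le> j \<Longrightarrow> j \<le> n \<Longrightarrow> s j \<le> s i"
    and pos: "\<forall>i\<in>{k..n}. 0 < s i" and "s k < W" "k \<le> n"
    and "\<not> shelf_packs W H (map s [k..<n+1])"
  shows "(W - s k) * (H - s k) + (s k)\<^sup>2 < (\<Sum>i=k..n. (s i)\<^sup>2)"
proof -
  have list: "map s [k..<n+1] = s k # map s [Suc k..<n+1]"
    using \<open>k \<le> n\<close> by (simp add: upt_conv_Cons del: upt_Suc)
  have "sorted_wrt (\<ge>) (map s [k..<n+1])"
    unfolding sorted_wrt_map by (rule sorted_wrt_mono_rel[OF _ sorted_wrt_upt]) (auto intro: mono)
  moreover have "\<forall>x\<in>set (map s [Suc k..<n+1]). 0 \<le> x"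
    using pos by (auto intro: less_imp_le)
  moreover have "0 < s k"
    using pos \<open>k \<le> n\<close> by simp
  ultimately have "(W - s k) * (H - s k) + (s k)\<^sup>2 < (\<Sum>x\<leftarrow>map s [k..<n+1]. x\<^sup>2)"
    using assms(3,5) unfolding list by (intro shelf_packs_fails_area)
  also have "\<dots> = (\<Sum>i=k..n. (s i)\<^sup>2)"
    by (simp add: sum_set_upt_conv_sum_list_nat[symmetric] o_def atLeastLessThanSuc_atLeastAtMost del: upt_Suc)
  finally show ?thesis .
qed

theorem lemma15:
  fixes s :: "nat \<Rightarrow> real" and n :: nat
  assumes pos: "\<forall>i\<in>{1..n}. 0 < s i"
    and noninc: "\<forall>i. 1 \<le> i \<and> i < n \<longrightarrow> s (Suc i) \<le> s i"
    and s1: "s 1 \<le> 0.295"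
    and fails: "\<not> shelf_packs 1.388 1.388 (map s [5..<n+1])"
  shows "(\<Sum>i=1..n. (s i)\<^sup>2) > 8 / 5"
proof -
  define W :: real where "W = 1.388"
  have mono: "s j \<le> s i" if "1 \<le> i" "i \<le> j" "j \<le> n" for i j
    using lift_Suc_antimono_le_ivl[OF noninc that] .
  have "n \<ge> 5"
    using fails by (rule contrapos_np) (simp add: shelf_packs_def)
  have "s 5 < W"
    using mono[of 1 5] s1 \<open>n \<ge> 5\<close> unfolding W_def by simp
  then have tail: "(W - s 5)\<^sup>2 + (s 5)\<^sup>2 < (\<Sum>i=5..n. (s i)\<^sup>2)"
    using shelf_packs_upt_fails_area[of 5 n s W W] mono pos fails \<open>n \<ge> 5\<close>
    unfolding W_def by (simp add: power2_eq_square)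
  have "(\<Sum>i=1..4::nat. (s 5)\<^sup>2) \<le> (\<Sum>i=1..4. (s i)\<^sup>2)"
    using mono pos \<open>n \<ge> 5\<close> by (intro sum_mono power_mono) (auto intro: less_imp_le)
  then have head: "4 * (s 5)\<^sup>2 \<le> (\<Sum>i=1..4. (s i)\<^sup>2)"
    by simp
  have "(\<Sum>i=1..n. (s i)\<^sup>2) = (\<Sum>i=1..4. (s i)\<^sup>2) + (\<Sum>i=5..n. (s i)\<^sup>2)"
    using sum.ub_add_nat[of 1 4 "\<lambda>i. (s i)\<^sup>2" "n - 4"] \<open>n \<ge> 5\<close> by simp
  moreover have "48 / 5 < 5 * W\<^sup>2"
    unfolding W_def by (simp add: power2_eq_square)
  ultimately show ?thesis
    using head tail weighted_square_sum_lower_bound[of 5 W "s 5"] by simp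
qed

end
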